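(* If $\mathcal F_1$ and $\mathcal F_2$ are distributive forest algebras (finite or infinite), then $\mathcal F_1\wr\mathcal F_2$ is 2-distributive.
   Context: A forest algebra is a pair $(H,V)$ where $H$ is a monoid written additively, $V$ is a monoid written multiplicatively, and $V$ acts faithfully on $H$. For each $h$ there is $I_h\in V$ with $I_h h'=h+h'$, and each $h$ is of the form $v\cdot 0_H$. All forest algebras are horizontally commutative and idempotent ($h_1+h_2=h_2+h_1$, $h+h=h$). Morphisms preserve the monoid operations, the action and $h\mapsto I_h$. The free forest algebra $\Sigma^\Delta=(H_\Sigma,V_\Sigma)$ has as forest part the finite sets of unordered trees $\alpha[C]$ (with $\alpha\in\Sigma$ and $C$ a finite set of trees), under union. Its contexts are forests with one leaf replaced by a hole, acting by substitution. $\pi(f)$ is the prefix-closed set of root-starting (not necessarily maximal) label paths of a forest $f$. $(H,V)$ is distributive if $v(h_1+h_2)=vh_1+vh_2$ for all $v,h_1,h_2$. It is 2-distributive if for every finite alphabet $\Sigma$, every morphism $\phi:\Sigma^\Delta\to(H,V)$, every context $v$, and all forests $f_1,f_2$ with $\pi(f_1)=\pi(f_2)$, we have $\phi(v(f_1+f_2))=\phi(vf_1+vf_2)$. Wreath product: $(H_1,V_1)\wr(H_2,V_2)=(H_1\times H_2,\ V_1^{H_2}\times V_2)$. The action is $(f,v)(h_1,h_2)=(f(h_2)h_1,\ vh_2)$. Multiplication is $(f,v)(f',v')=(f'',vv')$ with $f''(h)=f(v'h)\cdot f'(h)$. $H_1\times H_2$ carries the direct product structure. *)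

theory Defs
  imports "HOL-Library.FSet"
begin

text \<open>A forest algebra structure: horizontal monoid (hz, hp), vertical monoid (vo, vm),
  the action act of V on H, and the map h \<mapsto> I_h (ins).\<close>

record ('h, 'v) fa =
  hz  :: 'h
  hp  :: "'h \<Rightarrow> 'h \<Rightarrow> 'h"
  vo  :: 'v
  vm  :: "'v \<Rightarrow> 'v \<Rightarrow> 'v"
  act :: "'v \<Rightarrow> 'h \<Rightarrow> 'h"
  ins :: "'h \<Rightarrow> 'v"

definition forest_algebra :: "('h, 'v, 'z) fa_scheme \<Rightarrow> bool" where
  "forest_algebra F \<longleftrightarrow>
     (\<forall>a b c. hp F (hp F a b) c = hp F a (hp F b c)) \<and>
     (\<forall>a. hp F (hz F) a = a \<and> hp F a (hz F) = a) \<and>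
     (\<forall>a b. hp F a b = hp F b a) \<and>
     (\<forall>a. hp F a a = a) \<and>
     (\<forall>u v w. vm F (vm F u v) w = vm F u (vm F v w)) \<and>
     (\<forall>v. vm F (vo F) v = v \<and> vm F v (vo F) = v) \<and>
     (\<forall>h. act F (vo F) h = h) \<and>
     (\<forall>v w h. act F (vm F v w) h = act F v (act F w h)) \<and>
     (\<forall>v w. (\<forall>h. act F v h = act F w h) \<longrightarrow> v = w) \<and>
     (\<forall>h h'. act F (ins F h) h' = hp F h h') \<and>
     (\<forall>h. \<exists>v. h = act F v (hz F))"

definition distributive :: "('h, 'v, 'z) fa_scheme \<Rightarrow> bool" where
  "distributive F \<longleftrightarrow> (\<forall>v h1 h2. act F v (hp F h1 h2) = hp F (act F v h1) (act F v h2))"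

definition fa_morphism ::
  "('h, 'v, 'z) fa_scheme \<Rightarrow> ('h2, 'v2, 'z2) fa_scheme \<Rightarrow> ('h \<Rightarrow> 'h2) \<Rightarrow> ('v \<Rightarrow> 'v2) \<Rightarrow> bool" where
  "fa_morphism F G \<phi>H \<phi>V \<longleftrightarrow>
     \<phi>H (hz F) = hz G \<and>
     (\<forall>a b. \<phi>H (hp F a b) = hp G (\<phi>H a) (\<phi>H b)) \<and>
     \<phi>V (vo F) = vo G \<and>
     (\<forall>v w. \<phi>V (vm F v w) = vm G (\<phi>V v) (\<phi>V w)) \<and>
     (\<forall>v h. \<phi>H (act F v h) = act G (\<phi>V v) (\<phi>H h)) \<and>
     (\<forall>h. \<phi>V (ins F h) = ins G (\<phi>H h))"

datatype 'a tree = Node 'a "'a tree fset"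

type_synonym 'a forest = "'a tree fset"

text \<open>Contexts (forests with exactly one hole at a leaf position), uniquely represented:
  CHole F denotes F + \<box>, CNode F a c denotes F + a[c].\<close>
datatype 'a ctx = CHole "'a forest" | CNode "'a forest" 'a "'a ctx"

fun capp :: "'a ctx \<Rightarrow> 'a forest \<Rightarrow> 'a forest" where
  "capp (CHole F) f = F |\<union>| f"
| "capp (CNode F a c) f = finsert (Node a (capp c f)) F"

fun cadd :: "'a forest \<Rightarrow> 'a ctx \<Rightarrow> 'a ctx" where
  "cadd F (CHole G) = CHole (F |\<union>| G)"
| "cadd F (CNode G a c) = CNode (F |\<union>| G) a c"

fun ccomp :: "'a ctx \<Rightarrow> 'a ctx \<Rightarrow> 'a ctx" where
  "ccomp (CHole F) d = cadd F d"
| "ccomp (CNode F a c) d = CNode F a (ccomp c d)"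

definition free_fa :: "'a itself \<Rightarrow> ('a forest, 'a ctx) fa" where
  "free_fa _ = \<lparr> hz = {||}, hp = (|\<union>|), vo = CHole {||}, vm = ccomp, act = capp,
                 ins = CHole \<rparr>"

text \<open>pi(f): the prefix-closed set of root-starting label paths of a forest.\<close>
inductive is_path :: "'a forest \<Rightarrow> 'a list \<Rightarrow> bool" where
  path_nil: "is_path f []"
| path_cons: "Node a C |\<in>| f \<Longrightarrow> is_path C p \<Longrightarrow> is_path f (a # p)"

definition paths :: "'a forest \<Rightarrow> 'a list set" where
  "paths f = {p. is_path f p}"

text \<open>2-distributivity with respect to a (finite) alphabet type 'a; the theorem quantifies
  over all finite types 'a.\<close>
definition two_distributive_over :: "'a itself \<Rightarrow> ('h, 'v, 'z) fa_scheme \<Rightarrow> bool" where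
  "two_distributive_over T F \<longleftrightarrow>
     (\<forall>\<phi>H \<phi>V. fa_morphism (free_fa T) F \<phi>H \<phi>V \<longrightarrow>
        (\<forall>v f1 f2. paths f1 = paths f2 \<longrightarrow>
           \<phi>H (capp v (f1 |\<union>| f2)) = \<phi>H (capp v f1 |\<union>| capp v f2)))"

definition wreath :: "('h1, 'v1, 'z1) fa_scheme \<Rightarrow> ('h2, 'v2, 'z2) fa_scheme \<Rightarrow>
    ('h1 \<times> 'h2, ('h2 \<Rightarrow> 'v1) \<times> 'v2) fa" where
  "wreath F1 F2 = \<lparr>
     hz = (hz F1, hz F2),
     hp = (\<lambda>(a1, a2) (b1, b2). (hp F1 a1 b1, hp F2 a2 b2)),
     vo = (\<lambda>_. vo F1, vo F2),
     vm = (\<lambda>(f, v) (f', v'). (\<lambda>h. vm F1 (f (act F2 v' h)) (f' h), vm F2 v v')),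
     act = (\<lambda>(f, v) (h1, h2). (act F1 (f h2) h1, act F2 v h2)),
     ins = (\<lambda>(h1, h2). (\<lambda>_. ins F1 h1, ins F2 h2)) \<rparr>"

end

theory Submission
  imports Defs
begin

text \<open>The second component of a morphism from the free forest algebra into the wreath
  product is a morphism into the distributive algebra \<open>F\<^sub>2\<close>. Ordering an idempotent
  commutative monoid by \<open>a \<le> b \<longleftrightarrow> a + b = b\<close>, distributivity makes every context monotone,
  and an induction on trees shows that the value of a forest grows with its path set; hence
  forests with the same paths have the same \<open>F\<^sub>2\<close>-component \<open>b\<close>. A context then acts on
  \<open>(a\<^sub>1, b)\<close> and \<open>(a\<^sub>2, b)\<close> through the same element of \<open>V\<^sub>1\<close>, so distributivity of \<open>F\<^sub>1\<close>
  and idempotence in \<open>F\<^sub>2\<close> finish the proof.\<close>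

definition hle :: "('h, 'v, 'z) fa_scheme \<Rightarrow> 'h \<Rightarrow> 'h \<Rightarrow> bool" where
  "hle F a b \<longleftrightarrow> hp F a b = b"

context
  fixes F :: "('h, 'v, 'z) fa_scheme"
  assumes fa: "forest_algebra F"
begin

lemma hp_assoc: "hp F (hp F a b) c = hp F a (hp F b c)"
  using fa unfolding forest_algebra_def by blast

lemma hp_commute: "hp F a b = hp F b a"
  using fa unfolding forest_algebra_def by blast

lemma hp_idem: "hp F a a = a"
  using fa unfolding forest_algebra_def by blast

lemma hp_zero_left: "hp F (hz F) a = a"
  using fa unfolding forest_algebra_def by blast

lemma hle_antisym: "hle F a b \<Longrightarrow> hle F b a \<Longrightarrow> a = b"
  unfolding hle_def by (metis hp_commute)

lemma hle_trans: "hle F a b \<Longrightarrow> hle F b c \<Longrightarrow> hle F a c"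
  unfolding hle_def by (metis hp_assoc)

lemma hle_hp_left: "hle F a (hp F a b)"
  unfolding hle_def by (metis hp_assoc hp_idem)

lemma hp_hle: "hle F a c \<Longrightarrow> hle F b c \<Longrightarrow> hle F (hp F a b) c"
  unfolding hle_def by (metis hp_assoc)

lemma hle_zero: "hle F (hz F) a"
  unfolding hle_def by (rule hp_zero_left)

end

lemma distributive_act_hle:
  assumes "distributive F" and "hle F a b"
  shows "hle F (act F v a) (act F v b)"
  using assms unfolding distributive_def hle_def by metis

lemma fa_morphism_comp:
  assumes "fa_morphism F G \<phi>H \<phi>V" and "fa_morphism G K \<psi>H \<psi>V"
  shows "fa_morphism F K (\<psi>H \<circ> \<phi>H) (\<psi>V \<circ> \<phi>V)"
  using assms unfolding fa_morphism_def by simp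

lemma fa_morphism_wreath_snd: "fa_morphism (wreath F1 F2) F2 snd snd"
  unfolding fa_morphism_def wreath_def by (simp split: prod.splits)

context
  fixes F :: "('h, 'v, 'z) fa_scheme" and \<phi>H :: "'a forest \<Rightarrow> 'h" and \<phi>V
  assumes mor: "fa_morphism (free_fa TYPE('a)) F \<phi>H \<phi>V"
begin

lemma free_morphism_empty: "\<phi>H {||} = hz F"
  using mor unfolding fa_morphism_def free_fa_def by simp

lemma free_morphism_union: "\<phi>H (f |\<union>| g) = hp F (\<phi>H f) (\<phi>H g)"
  using mor unfolding fa_morphism_def free_fa_def by simp

lemma free_morphism_capp: "\<phi>H (capp c f) = act F (\<phi>V c) (\<phi>H f)"
  using mor unfolding fa_morphism_def free_fa_def by simp

lemma free_morphism_Node: "\<phi>H {|Node x t|} = act F (\<phi>V (CNode {||} x (CHole {||}))) (\<phi>H t)"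
  using free_morphism_capp[of "CNode {||} x (CHole {||})" t] by simp

lemma free_morphism_insert: "\<phi>H (finsert t f) = hp F (\<phi>H {|t|}) (\<phi>H f)"
  using free_morphism_union[of "{|t|}" f] by simp

lemma distributive_free_morphism_merge_roots:
  assumes dist: "distributive F" and "S \<noteq> {||}"
  shows "\<phi>H (Node x |`| S) = \<phi>H {|Node x (ffUnion S)|}"
  using assms(2)
proof (induction S rule: fset_induct)
  case empty
  then show ?case by simp
next
  case (insert t S)
  show ?case
  proof (cases "S = {||}")
    case True
    then show ?thesis by simp
  next
    case False
    have "\<phi>H (Node x |`| finsert t S) = hp F (\<phi>H {|Node x t|}) (\<phi>H (Node x |`| S))"
      unfolding fimage_finsert by (rule free_morphism_insert)
    also have "\<dots> = hp F (\<phi>H {|Node x t|}) (\<phi>H {|Node x (ffUnion S)|})"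
      using insert.IH False by simp
    also have "\<dots> = \<phi>H {|Node x (t |\<union>| ffUnion S)|}"
      using dist unfolding distributive_def by (simp add: free_morphism_Node free_morphism_union)
    finally show ?thesis by simp
  qed
qed

context
  assumes fa: "forest_algebra F"
begin

lemma free_morphism_fsubset_hle: "f |\<subseteq>| g \<Longrightarrow> hle F (\<phi>H f) (\<phi>H g)"
  by (metis fa free_morphism_union hle_hp_left funion_absorb2 funion_commute)

lemma free_morphism_hle_if_trees_hle:
  "(\<And>t. t |\<in>| f \<Longrightarrow> hle F (\<phi>H {|t|}) b) \<Longrightarrow> hle F (\<phi>H f) b"
proof (induction f rule: fset_induct)
  case empty
  then show ?case using fa free_morphism_empty hle_zero by metis
next
  case (insert t f)
  then show ?case using fa free_morphism_insert hp_hle by (metis finsertCI)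
qed

end

end

lemma is_path_Cons_iff: "is_path f (x # p) \<longleftrightarrow> (\<exists>C. Node x C |\<in>| f \<and> is_path C p)"
  by (auto elim: is_path.cases intro: is_path.intros)

lemma is_path_mono: "is_path f p \<Longrightarrow> f |\<subseteq>| g \<Longrightarrow> is_path g p"
  by (induction rule: is_path.induct) (auto intro: is_path.intros)

lemma paths_mono: "f |\<subseteq>| g \<Longrightarrow> paths f \<subseteq> paths g"
  unfolding paths_def by (auto intro: is_path_mono)

lemma fsubset_ffUnion: "A |\<in>| S \<Longrightarrow> A |\<subseteq>| ffUnion S"
  using ffUnion_fsubset_iff[of S "ffUnion S"] by auto

definition label_children :: "'a \<Rightarrow> 'a forest \<Rightarrow> 'a forest fset" where
  "label_children x g =
     (\<lambda>t. case t of Node _ C \<Rightarrow> C) |`| ffilter (\<lambda>t. case t of Node y _ \<Rightarrow> y = x) g"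

lemma mem_label_children_iff: "C |\<in>| label_children x g \<longleftrightarrow> Node x C |\<in>| g"
proof
  assume "Node x C |\<in>| g"
  then show "C |\<in>| label_children x g"
    unfolding label_children_def by (intro fimage_eqI[where x = "Node x C"]) auto
qed (auto simp: label_children_def split: tree.splits)

lemma Node_image_label_children: "Node x |`| label_children x g |\<subseteq>| g"
  by (auto simp: mem_label_children_iff)

lemma paths_Node_subsetD:
  assumes "paths {|Node x C|} \<subseteq> paths g"
  shows "label_children x g \<noteq> {||}" and "paths C \<subseteq> paths (ffUnion (label_children x g))"
proof -
  have Node_path: "is_path g (x # p)" if "is_path C p" for p
    using assms that unfolding paths_def by (auto intro: is_path.intros)
  show "label_children x g \<noteq> {||}"
    using Node_path[OF path_nil] by (auto simp: is_path_Cons_iff mem_label_children_iff)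
  show "paths C \<subseteq> paths (ffUnion (label_children x g))"
  proof
    fix p assume "p \<in> paths C"
    then obtain C' where "C' |\<in>| label_children x g" and "is_path C' p"
      using Node_path unfolding paths_def by (auto simp: is_path_Cons_iff mem_label_children_iff)
    then show "p \<in> paths (ffUnion (label_children x g))"
      unfolding paths_def using is_path_mono fsubset_ffUnion by blast
  qed
qed

lemma distributive_free_morphism_paths_mono:
  assumes fa: "forest_algebra F" and dist: "distributive F"
    and mor: "fa_morphism (free_fa TYPE('a)) F \<phi>H \<phi>V"
    and sub: "paths f \<subseteq> paths g"
  shows "hle F (\<phi>H f) (\<phi>H (g :: 'a forest))"
proof -
  have tree_case: "hle F (\<phi>H {|t|}) (\<phi>H g)" if "paths {|t|} \<subseteq> paths g" for t g
    using that
  proof (induction t arbitrary: g)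
    case (Node x C)
    \<comment> \<open>By distributivity the \<open>x\<close>-rooted trees of \<open>g\<close> are worth the single tree
      \<open>x[\<Union>S]\<close>, and the paths of \<open>C\<close> are paths of \<open>\<Union>S\<close>.\<close>
    let ?S = "label_children x g"
    have "hle F (\<phi>H C) (\<phi>H (ffUnion ?S))"
    proof (rule free_morphism_hle_if_trees_hle[OF mor fa])
      fix t assume "t |\<in>| C"
      moreover have "paths {|t|} \<subseteq> paths (ffUnion ?S)"
        using paths_mono[of "{|t|}" C] \<open>t |\<in>| C\<close> paths_Node_subsetD(2)[OF Node.prems] by auto
      ultimately show "hle F (\<phi>H {|t|}) (\<phi>H (ffUnion ?S))"
        using Node.IH by blast
    qed
    then have "hle F (\<phi>H {|Node x C|}) (\<phi>H {|Node x (ffUnion ?S)|})"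
      using dist distributive_act_hle by (simp add: free_morphism_Node[OF mor])
    also have "\<phi>H {|Node x (ffUnion ?S)|} = \<phi>H (Node x |`| ?S)"
      using distributive_free_morphism_merge_roots[OF mor dist paths_Node_subsetD(1)[OF Node.prems]]
      by simp
    finally show ?case
      using hle_trans[OF fa] free_morphism_fsubset_hle[OF mor fa Node_image_label_children]
      by blast
  qed
  show ?thesis
  proof (rule free_morphism_hle_if_trees_hle[OF mor fa])
    fix t assume "t |\<in>| f"
    then have "paths {|t|} \<subseteq> paths g"
      using sub paths_mono[of "{|t|}" f] by auto
    then show "hle F (\<phi>H {|t|}) (\<phi>H g)"
      by (rule tree_case)
  qed
qed

corollary distributive_free_morphism_paths_eq:
  assumes "forest_algebra F" and "distributive F"
    and "fa_morphism (free_fa TYPE('a)) F \<phi>H \<phi>V"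
    and "paths f = paths (g :: 'a forest)"
  shows "\<phi>H f = \<phi>H g"
  using assms distributive_free_morphism_paths_mono hle_antisym by (metis order_refl)

lemma wreath_act_hp_same_snd:
  assumes "distributive F1" and "forest_algebra F2"
  shows "act (wreath F1 F2) w (hp (wreath F1 F2) (a1, b) (a2, b))
       = hp (wreath F1 F2) (act (wreath F1 F2) w (a1, b)) (act (wreath F1 F2) w (a2, b))"
  using assms unfolding distributive_def by (simp add: wreath_def hp_idem split: prod.splits)

theorem mainTheorem3:
  fixes F1 :: "('h1, 'v1) fa" and F2 :: "('h2, 'v2) fa"
  assumes "forest_algebra F1" and "distributive F1"
      and "forest_algebra F2" and "distributive F2"
  shows "two_distributive_over TYPE('a::finite) (wreath F1 F2)"
  unfolding two_distributive_over_def
proof (intro allI impI)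
  fix \<phi>H :: "'a forest \<Rightarrow> 'h1 \<times> 'h2" and \<phi>V v and f1 f2 :: "'a forest"
  assume mor: "fa_morphism (free_fa TYPE('a)) (wreath F1 F2) \<phi>H \<phi>V"
    and "paths f1 = paths f2"
  then have "snd (\<phi>H f1) = snd (\<phi>H f2)"
    using distributive_free_morphism_paths_eq[OF assms(3,4)]
      fa_morphism_comp[OF mor fa_morphism_wreath_snd] by (metis comp_apply)
  then obtain a1 a2 b where "\<phi>H f1 = (a1, b)" and "\<phi>H f2 = (a2, b)"
    by (metis prod.exhaust_sel)
  then show "\<phi>H (capp v (f1 |\<union>| f2)) = \<phi>H (capp v f1 |\<union>| capp v f2)"
    using wreath_act_hp_same_snd[OF assms(2,3)]
    by (simp add: free_morphism_capp[OF mor] free_morphism_union[OF mor])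
qed

end
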